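(* Let $\Phi$ be an atomic CSP and $\pi$ an admissible projection scheme. Let $(X_t,Y_t)_{t\ge0}$ be the optimal one-step coupling of two copies of the Glauber dynamics for $\mu_\pi$ with arbitrary initial states $X_0,Y_0$. If $(v,t)\in U\cap D$, then there exists a path $C^1,C^2,\dots,C^k$ in $G(\mathcal{C})$ such that: $v\in\mathrm{vbl}(C^1)$; each $C^i$ is not satisfied in at least one of $X_{t-1}^{-v}$ and $Y_{t-1}^{-v}$; and $\mathrm{vbl}(C^k)$ contains some $u\neq v$ with $X_{t-1}(u)\neq Y_{t-1}(u)$.
   Context: CSP notation: $\Phi=(V,(\Omega_v),\mathcal{C})$, constraints depending only on $\mathrm{vbl}(C)$; atomic: each $C$ has a unique violating assignment $\boldsymbol{C}\in\prod_{v\in\mathrm{vbl}(C)}\Omega_v$; degree $\Delta=\max_C|\{C':\mathrm{vbl}(C)\cap\mathrm{vbl}(C')\ne\emptyset\}|$; $\mu_\Phi$ uniform on satisfying assignments. Projection scheme $\pi_v:\Omega_v\to Q_v$ ($Q_v$ finite, nonempty); $\mathbb{P}_\pi,\mu_\pi$ pushforwards under $\pi$ of the uniform distribution on $\prod_v\Omega_v$ and of $\mu_\Phi$; $\boldsymbol{C}_\pi(v)=\pi_v(\boldsymbol{C}(v))$; $b(C)=\prod_{u\in\mathrm{vbl}(C)}|\pi_u^{-1}(\boldsymbol{C}_\pi(u))|^{-1}$, $b=\max_Cb(C)$; $q_{\mathrm{TV}}=\max_{v,Y}d_{\mathrm{TV}}(\mathbb{P}_\pi[\mathrm{value}(v)=\cdot],\mu_\pi[\mathrm{value}(v)=\cdot\mid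 Y^{-v}])$ where $Y^{-v}$ is $Y$ with coordinate $v$ removed and the conditioning is on the other coordinates; $\overline{\mathrm{vbl}}(C)=\{v\in\mathrm{vbl}(C):|Q_v|>1\}$; $\zeta(C)=\max\{1,\max_{v\in\overline{\mathrm{vbl}}(C)}\min(\frac{(1-3b)^\Delta q_{\mathrm{TV}}}{\mathbb{P}_\pi[\mathrm{value}(v)=\boldsymbol{C}_\pi(v)]},2\Delta)\}$. Admissible (parameter $\eta\in(0,1/2)$): (A1) $b\le\eta/(300\Delta)$; (A2) there is $\kappa\ge4\log(3000\Delta)$, $\kappa\le K(\log\Delta+\log\max|Q_v|+\log\max|\mathrm{vbl}(C)|)$ ($K$ universal) with $|\overline{\mathrm{vbl}}(C)|^2\kappa^2\zeta(C)\prod_{v\in\overline{\mathrm{vbl}}(C)}((1-3b)^{-\Delta}\mathbb{P}_\pi[\mathrm{value}(v)=\boldsymbol{C}_\pi(v)]+e^{-\kappa/3})\le(60000\Delta)^{-2}$ for all $C$; (A3) for $v\in\mathrm{vbl}(C)\cap\mathrm{vbl}(C')$, $\frac12\mathbb{P}_\pi[\mathrm{value}(v)=\boldsymbol{C}_\pi(v)]\le\mathbb{P}_\pi[\mathrm{value}(v)=\boldsymbol{C}'_\pi(v)]\le2\mathbb{P}_\pi[\mathrm{value}(v)=\boldsymbol{C}_\pi(v)]$; (A4) $\pi_v$ computable and fibres samplable in time $K\log|\Omega_v|$. $G(\mathcal{C})$ is the graph on $\mathcal{C}$ with $C\ne C'$ adjacent iff $\mathrm{vbl}(C)\cap\mathrm{vbl}(C')\ne\emptyset$;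 a path is a sequence of constraints with consecutive ones adjacent. A partial assignment $Z$ (defined on a subset of $V$) does not satisfy $C$ if $Z(w)=\boldsymbol{C}_\pi(w)$ for all $w\in\mathrm{vbl}(C)$ at which $Z$ is defined. The optimal one-step coupling: given $(X_{t-1},Y_{t-1})$, choose $v\in V$ uniformly at random ($v$ is "updated at time $t$"), set $X_t(w)=X_{t-1}(w)$, $Y_t(w)=Y_{t-1}(w)$ for $w\ne v$, and draw $(X_t(v),Y_t(v))$ from an optimal (total-variation-achieving) coupling of $\mu_\pi[\mathrm{value}(v)=\cdot\mid X_{t-1}^{-v}]$ and $\mu_\pi[\mathrm{value}(v)=\cdot\mid Y_{t-1}^{-v}]$. $U=\{(v,t): v\text{ is updated at time }t\}$ and $D=\{(v,t):X_t(v)\ne Y_t(v)\}$. *)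

theory Defs
  imports "HOL-Probability.Probability"
begin

text \<open>
  Atomic CSP: variables V, finite domains Om v, constraints Cs, each constraint C
  with variable set vbl C and a unique violating assignment viol C (on vbl C).
\<close>

definition atomic_csp ::
  "'v set \<Rightarrow> ('v \<Rightarrow> 'a set) \<Rightarrow> 'c set \<Rightarrow> ('c \<Rightarrow> 'v set) \<Rightarrow> ('c \<Rightarrow> 'v \<Rightarrow> 'a) \<Rightarrow> bool" where
  "atomic_csp V Om Cs vbl viol \<longleftrightarrow>
     finite V \<and> (\<forall>v\<in>V. finite (Om v) \<and> Om v \<noteq> {}) \<and> finite Cs \<and>
     (\<forall>C\<in>Cs. vbl C \<subseteq> V \<and> (\<forall>u\<in>vbl C. viol C u \<in> Om u))"

definition proj_scheme ::
  "'v set \<Rightarrow> ('v \<Rightarrow> 'a set) \<Rightarrow> ('v \<Rightarrow> 'a \<Rightarrow> 'q) \<Rightarrow> ('v \<Rightarrow> 'q set) \<Rightarrow> bool" where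
  "proj_scheme V Om prj Q \<longleftrightarrow>
     (\<forall>v\<in>V. finite (Q v) \<and> Q v \<noteq> {} \<and> prj v ` Om v \<subseteq> Q v)"

definition violates :: "('c \<Rightarrow> 'v set) \<Rightarrow> ('c \<Rightarrow> 'v \<Rightarrow> 'a) \<Rightarrow> 'c \<Rightarrow> ('v \<Rightarrow> 'a) \<Rightarrow> bool" where
  "violates vbl viol C \<sigma> \<longleftrightarrow> (\<forall>u\<in>vbl C. \<sigma> u = viol C u)"

definition sat_assignments ::
  "'v set \<Rightarrow> ('v \<Rightarrow> 'a set) \<Rightarrow> 'c set \<Rightarrow> ('c \<Rightarrow> 'v set) \<Rightarrow> ('c \<Rightarrow> 'v \<Rightarrow> 'a) \<Rightarrow> ('v \<Rightarrow> 'a) set" where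
  "sat_assignments V Om Cs vbl viol =
     {\<sigma> \<in> PiE V Om. \<forall>C\<in>Cs. \<not> violates vbl viol C \<sigma>}"

definition mu_Phi where
  "mu_Phi V Om Cs vbl viol = pmf_of_set (sat_assignments V Om Cs vbl viol)"

definition proj :: "'v set \<Rightarrow> ('v \<Rightarrow> 'a \<Rightarrow> 'q) \<Rightarrow> ('v \<Rightarrow> 'a) \<Rightarrow> ('v \<Rightarrow> 'q)" where
  "proj V prj \<sigma> = restrict (\<lambda>v. prj v (\<sigma> v)) V"

definition P_pi where
  "P_pi V Om prj = map_pmf (proj V prj) (pmf_of_set (PiE V Om))"

definition mu_pi where
  "mu_pi V Om Cs vbl viol prj = map_pmf (proj V prj) (mu_Phi V Om Cs vbl viol)"

definition agree_off :: "'v set \<Rightarrow> 'v \<Rightarrow> ('v \<Rightarrow> 'q) \<Rightarrow> ('v \<Rightarrow> 'q) set" where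
  "agree_off V v Y = {Z. \<forall>w\<in>V - {v}. Z w = Y w}"

text \<open>Conditional marginal mu[value(v) = . | Y^{-v}] (defined when the event has positive mass).\<close>
definition cond_marg :: "('v \<Rightarrow> 'q) pmf \<Rightarrow> 'v set \<Rightarrow> 'v \<Rightarrow> ('v \<Rightarrow> 'q) \<Rightarrow> 'q pmf" where
  "cond_marg mu V v Y = map_pmf (\<lambda>Z. Z v) (cond_pmf mu (agree_off V v Y))"

definition marg :: "('v \<Rightarrow> 'q) pmf \<Rightarrow> 'v \<Rightarrow> 'q pmf" where
  "marg mu v = map_pmf (\<lambda>Z. Z v) mu"

definition tvd :: "'b pmf \<Rightarrow> 'b pmf \<Rightarrow> real" where
  "tvd p q = (SUP A. \<bar>measure_pmf.prob p A - measure_pmf.prob q A\<bar>)"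

definition optimal_coupling :: "('b \<times> 'b) pmf \<Rightarrow> 'b pmf \<Rightarrow> 'b pmf \<Rightarrow> bool" where
  "optimal_coupling nu p q \<longleftrightarrow>
     map_pmf fst nu = p \<and> map_pmf snd nu = q \<and>
     measure_pmf.prob nu {(a, b). a \<noteq> b} = tvd p q"

definition degree :: "'c set \<Rightarrow> ('c \<Rightarrow> 'v set) \<Rightarrow> nat" where
  "degree Cs vbl = Max (insert 0 ((\<lambda>C. card {C'\<in>Cs. vbl C \<inter> vbl C' \<noteq> {}}) ` Cs))"

definition bC where
  "bC Om vbl viol prj C = (\<Prod>u\<in>vbl C. 1 / real (card {x\<in>Om u. prj u x = prj u (viol C u)}))"

definition bmax where
  "bmax Om Cs vbl viol prj = Max (insert 0 (bC Om vbl viol prj ` Cs))"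

definition pC where
  "pC V Om viol prj v C = pmf (marg (P_pi V Om prj) v) (prj v (viol C v))"

definition qTV where
  "qTV V Om Cs vbl viol prj Q = Max (insert 0
     {tvd (marg (P_pi V Om prj) v) (cond_marg (mu_pi V Om Cs vbl viol prj) V v Y) | v Y.
        v \<in> V \<and> Y \<in> PiE V Q \<and>
        measure_pmf.prob (mu_pi V Om Cs vbl viol prj) (agree_off V v Y) > 0})"

definition vblbar where
  "vblbar vbl Q C = {v \<in> vbl C. card (Q v) > 1}"

definition zeta where
  "zeta V Om Cs vbl viol prj Q C =
     (let b = bmax Om Cs vbl viol prj; D = degree Cs vbl in
      Max (insert 1 ((\<lambda>v. min ((1 - 3*b)^D * qTV V Om Cs vbl viol prj Q / pC V Om viol prj v C)
                              (2 * real D)) ` vblbar vbl Q C)))"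

text \<open>Admissibility with parameter eta, relative to the universal constant K
  (condition (A4) on computability is not formalized).\<close>
definition admissible where
  "admissible K eta V Om Cs vbl viol prj Q \<longleftrightarrow>
     (let b = bmax Om Cs vbl viol prj; D = real (degree Cs vbl) in
      0 < eta \<and> eta < 1/2 \<and>
      b \<le> eta / (300 * D) \<and>
      (\<exists>\<kappa>::real. \<kappa> \<ge> 4 * ln (3000 * D) \<and>
         \<kappa> \<le> K * (ln D + ln (real (Max (insert 0 ((\<lambda>v. card (Q v)) ` V))))
                    + ln (real (Max (insert 0 ((\<lambda>C. card (vbl C)) ` Cs))))) \<and>
         (\<forall>C\<in>Cs. real (card (vblbar vbl Q C))^2 * \<kappa>^2 * zeta V Om Cs vbl viol prj Q C *
             (\<Prod>v\<in>vblbar vbl Q C. inverse ((1 - 3*b) ^ degree Cs vbl) * pC V Om viol prj v C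
                                    + exp (-\<kappa>/3))
           \<le> inverse ((60000 * D)^2))) \<and>
      (\<forall>C\<in>Cs. \<forall>C'\<in>Cs. \<forall>v\<in>vbl C \<inter> vbl C'.
         pC V Om viol prj v C / 2 \<le> pC V Om viol prj v C' \<and>
         pC V Om viol prj v C' \<le> 2 * pC V Om viol prj v C))"

text \<open>Paths in the dependency graph G(Cs).\<close>
definition is_path :: "'c set \<Rightarrow> ('c \<Rightarrow> 'v set) \<Rightarrow> 'c list \<Rightarrow> bool" where
  "is_path Cs vbl cs \<longleftrightarrow> cs \<noteq> [] \<and> set cs \<subseteq> Cs \<and>
     (\<forall>i. Suc i < length cs \<longrightarrow> cs ! i \<noteq> cs ! Suc i \<and> vbl (cs ! i) \<inter> vbl (cs ! Suc i) \<noteq> {})"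

text \<open>The partial assignment Y^{-v} (Y restricted to V - {v}) does not satisfy C.\<close>
definition not_sat_off where
  "not_sat_off vbl viol prj v Y C \<longleftrightarrow> (\<forall>w\<in>vbl C - {v}. Y w = prj w (viol C w))"

end

(* Suppose there is no such path. Let R be the constraints reachable from v along paths of
   constraints left unsatisfied by X^-v or by Y^-v, and W = {v} \<union> vbl(R). Every other constraint
   meeting W is satisfied by both X^-v and Y^-v, so for Z = X, Y the satisfying assignments
   projecting to Z^-v split as a product of a part on W, constrained by R alone, and a part on
   V - W. Hence the conditional marginal at v only depends on Z on W - {v}, where X and Y agree.
   Equal marginals have total variation distance 0, so an optimal coupling never disagrees. *)

theory Submission
  imports Defs
begin

lemma cond_pmf_of_set:
  assumes "finite S" "S \<inter> E \<noteq> {}"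
  shows "cond_pmf (pmf_of_set S) E = pmf_of_set (S \<inter> E)"
proof (rule pmf_eqI)
  fix x
  have "S \<noteq> {}" "card S > 0" "card (S \<inter> E) > 0" using assms by (auto simp: card_gt_0_iff)
  then show "pmf (cond_pmf (pmf_of_set S) E) x = pmf (pmf_of_set (S \<inter> E)) x"
    using assms by (simp add: pmf_cond measure_pmf_of_set indicator_def Int_commute)
qed

lemma pmf_of_set_Times:
  assumes "finite A" "finite B" "A \<noteq> {}" "B \<noteq> {}"
  shows "pmf_of_set (A \<times> B) = pair_pmf (pmf_of_set A) (pmf_of_set B)"
proof (rule pmf_eqI)
  fix x :: "'a \<times> 'b"
  show "pmf (pmf_of_set (A \<times> B)) x = pmf (pair_pmf (pmf_of_set A) (pmf_of_set B)) x"
    using assms by (cases x) (simp add: pmf_pair card_cartesian_product indicator_def)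
qed

lemma map_pmf_of_set_bij_betw_Times_fst:
  assumes h: "bij_betw h A (B \<times> C)" and "finite A" "A \<noteq> {}"
    and f: "\<And>x. x \<in> A \<Longrightarrow> f x = g (fst (h x))"
  shows "map_pmf f (pmf_of_set A) = map_pmf g (pmf_of_set B)"
proof -
  have BC: "B \<times> C = h ` A" using h by (simp add: bij_betw_def)
  then have "B \<noteq> {}" "C \<noteq> {}" using \<open>A \<noteq> {}\<close> by auto
  moreover have "finite (B \<times> C)" using BC \<open>finite A\<close> by simp
  ultimately have "finite B" "finite C" by (simp_all add: finite_cartesian_product_iff)
  have "map_pmf f (pmf_of_set A) = map_pmf (g \<circ> fst) (map_pmf h (pmf_of_set A))"
    unfolding pmf.map_comp using f assms(2,3) by (intro map_pmf_cong) auto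
  with \<open>finite B\<close> \<open>finite C\<close> \<open>B \<noteq> {}\<close> \<open>C \<noteq> {}\<close> show ?thesis
    using assms(2,3) by (simp add: map_pmf_of_set_bij_betw[OF h] pmf_of_set_Times
        pmf.map_comp[symmetric] map_fst_pair_pmf)
qed

lemma optimal_coupling_same_diag:
  assumes "optimal_coupling nu p p" and "(a, b) \<in> set_pmf nu"
  shows "a = b"
proof -
  have "measure_pmf.prob nu {(a, b). a \<noteq> b} = 0"
    using assms(1) by (simp add: optimal_coupling_def tvd_def)
  then have "set_pmf nu \<inter> {(a, b). a \<noteq> b} = {}" by (simp add: measure_pmf_zero_iff)
  with assms(2) show ?thesis by auto
qed

definition sat_fibre ::
  "'v set \<Rightarrow> ('v \<Rightarrow> 'a set) \<Rightarrow> 'c set \<Rightarrow> ('c \<Rightarrow> 'v set) \<Rightarrow> ('c \<Rightarrow> 'v \<Rightarrow> 'a) \<Rightarrow>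
    ('v \<Rightarrow> 'a \<Rightarrow> 'q) \<Rightarrow> 'v \<Rightarrow> ('v \<Rightarrow> 'q) \<Rightarrow> ('v \<Rightarrow> 'a) set" where
  "sat_fibre V Om Cs vbl viol prj v Z =
     {\<sigma> \<in> sat_assignments V Om Cs vbl viol. \<forall>w\<in>V - {v}. prj w (\<sigma> w) = Z w}"

lemma violates_cong:
  "(\<And>u. u \<in> vbl C \<Longrightarrow> \<sigma> u = \<sigma>' u) \<Longrightarrow> violates vbl viol C \<sigma> = violates vbl viol C \<sigma>'"
  by (auto simp: violates_def)

lemma finite_sat_assignments:
  "atomic_csp V Om Cs vbl viol \<Longrightarrow> finite (sat_assignments V Om Cs vbl viol)"
  by (rule finite_subset[of _ "PiE V Om"])
     (auto simp: atomic_csp_def sat_assignments_def intro: finite_PiE)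

lemma restrict_sat_fibre:
  assumes "\<sigma> \<in> sat_fibre V Om Cs vbl viol prj v Z" and "W \<subseteq> V" and "R \<subseteq> Cs"
    and "\<And>C. C \<in> R \<Longrightarrow> vbl C \<subseteq> W"
  shows "restrict \<sigma> W \<in> sat_fibre W Om R vbl viol prj v Z"
proof -
  have "violates vbl viol C (restrict \<sigma> W) = violates vbl viol C \<sigma>" if "C \<in> R" for C
    using assms(4)[OF that] by (intro violates_cong) auto
  then show ?thesis
    using assms(1-3) by (auto simp: sat_fibre_def sat_assignments_def)
qed

text \<open>Gluing is possible because every constraint outside \<open>R\<close> that meets \<open>W\<close> is already
  satisfied by the conditioning \<open>Z\<^sup>-\<^sup>v\<close>.\<close>

lemma merge_sat_fibre:
  assumes csp: "atomic_csp V Om Cs vbl viol"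
    and "W \<subseteq> V" and R: "\<And>C. C \<in> R \<Longrightarrow> vbl C \<subseteq> W"
    and sep: "\<And>C. C \<in> Cs \<Longrightarrow> C \<notin> R \<Longrightarrow> vbl C \<inter> W \<noteq> {} \<Longrightarrow> \<not> not_sat_off vbl viol prj v Z C"
    and \<tau>: "\<tau> \<in> sat_fibre W Om R vbl viol prj v Z"
    and \<rho>: "\<rho> \<in> sat_fibre (V - W) Om {C \<in> Cs. vbl C \<subseteq> V - W} vbl viol prj v Z"
  shows "merge W (V - W) (\<tau>, \<rho>) \<in> sat_fibre V Om Cs vbl viol prj v Z"
proof -
  define \<sigma> where "\<sigma> = merge W (V - W) (\<tau>, \<rho>)"
  have vblV: "vbl C \<subseteq> V" if "C \<in> Cs" for C using csp that by (auto simp: atomic_csp_def)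
  have \<sigma>_PiE: "\<sigma> \<in> PiE V Om"
    using \<tau> \<rho> \<open>W \<subseteq> V\<close> PiE_cancel_merge[of W "V - W" \<tau> \<rho> Om]
    by (auto simp: \<sigma>_def sat_fibre_def sat_assignments_def Un_absorb1 PiE_iff)
  have \<sigma>_fibre: "prj w (\<sigma> w) = Z w" if "w \<in> V - {v}" for w
    using that \<tau> \<rho> by (cases "w \<in> W") (auto simp: \<sigma>_def sat_fibre_def)
  have "\<not> violates vbl viol C \<sigma>" if C: "C \<in> Cs" for C
  proof (cases "C \<in> R")
    case True
    then have "violates vbl viol C \<sigma> = violates vbl viol C \<tau>"
      using R by (intro violates_cong) (auto simp: \<sigma>_def merge_def)
    with True \<tau> show ?thesis by (simp add: sat_fibre_def sat_assignments_def)
  next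
    case notR: False
    show ?thesis
    proof (cases "vbl C \<subseteq> V - W")
      case True
      then have "violates vbl viol C \<sigma> = violates vbl viol C \<rho>"
        by (intro violates_cong) (auto simp: \<sigma>_def merge_def)
      with True C \<rho> show ?thesis by (simp add: sat_fibre_def sat_assignments_def)
    next
      case False
      then have "vbl C \<inter> W \<noteq> {}" using vblV[OF C] by auto
      with sep[OF C notR] obtain w where w: "w \<in> vbl C - {v}" "Z w \<noteq> prj w (viol C w)"
        by (auto simp: not_sat_off_def)
      with \<sigma>_fibre[of w] vblV[OF C] have "\<sigma> w \<noteq> viol C w" by auto
      with w show ?thesis by (auto simp: violates_def)
    qed
  qed
  with \<sigma>_PiE \<sigma>_fibre show ?thesis
    by (simp add: \<sigma>_def[symmetric] sat_fibre_def sat_assignments_def)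
qed

lemma sat_fibre_split:
  assumes csp: "atomic_csp V Om Cs vbl viol"
    and "W \<subseteq> V" and "R \<subseteq> Cs" and "\<And>C. C \<in> R \<Longrightarrow> vbl C \<subseteq> W"
    and "\<And>C. C \<in> Cs \<Longrightarrow> C \<notin> R \<Longrightarrow> vbl C \<inter> W \<noteq> {} \<Longrightarrow> \<not> not_sat_off vbl viol prj v Z C"
  shows "bij_betw (\<lambda>\<sigma>. (restrict \<sigma> W, restrict \<sigma> (V - W)))
           (sat_fibre V Om Cs vbl viol prj v Z)
           (sat_fibre W Om R vbl viol prj v Z \<times>
            sat_fibre (V - W) Om {C \<in> Cs. vbl C \<subseteq> V - W} vbl viol prj v Z)"
    (is "bij_betw ?split ?S (?L \<times> ?O)")
proof (rule bij_betw_byWitness[where f' = "merge W (V - W)"])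
  show "\<forall>\<sigma>\<in>?S. merge W (V - W) (?split \<sigma>) = \<sigma>"
    using \<open>W \<subseteq> V\<close> by (auto simp: sat_fibre_def sat_assignments_def Un_absorb1)
  show "\<forall>x\<in>?L \<times> ?O. ?split (merge W (V - W) x) = x"
    by (auto simp: sat_fibre_def sat_assignments_def)
  show "?split ` ?S \<subseteq> ?L \<times> ?O"
    using assms(2-4) by (auto intro!: restrict_sat_fibre)
  show "merge W (V - W) ` (?L \<times> ?O) \<subseteq> ?S"
    using merge_sat_fibre[OF assms(1,2,4,5)] by blast
qed

lemma cond_marg_mu_pi:
  assumes csp: "atomic_csp V Om Cs vbl viol"
    and sat: "sat_assignments V Om Cs vbl viol \<noteq> {}" and "v \<in> V"
    and pos: "measure_pmf.prob (mu_pi V Om Cs vbl viol prj) (agree_off V v Z) > 0"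
  shows "sat_fibre V Om Cs vbl viol prj v Z \<noteq> {}"
    and "cond_marg (mu_pi V Om Cs vbl viol prj) V v Z =
           map_pmf (\<lambda>\<sigma>. prj v (\<sigma> v)) (pmf_of_set (sat_fibre V Om Cs vbl viol prj v Z))"
proof -
  define S where "S = sat_assignments V Om Cs vbl viol"
  have "finite S" using finite_sat_assignments[OF csp] by (simp add: S_def)
  have fibre: "sat_fibre V Om Cs vbl viol prj v Z = S \<inter> proj V prj -` agree_off V v Z"
    by (auto simp: sat_fibre_def S_def proj_def agree_off_def)
  show ne: "sat_fibre V Om Cs vbl viol prj v Z \<noteq> {}"
  proof
    assume "sat_fibre V Om Cs vbl viol prj v Z = {}"
    then have "measure_pmf.prob (mu_pi V Om Cs vbl viol prj) (agree_off V v Z) = 0"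
      using \<open>finite S\<close> sat fibre
      by (simp add: mu_pi_def mu_Phi_def S_def[symmetric] measure_pmf_zero_iff)
    with pos show False by simp
  qed
  have "cond_pmf (mu_pi V Om Cs vbl viol prj) (agree_off V v Z) =
          map_pmf (proj V prj) (cond_pmf (pmf_of_set S) (proj V prj -` agree_off V v Z))"
    unfolding mu_pi_def mu_Phi_def S_def[symmetric]
    using \<open>finite S\<close> sat ne fibre by (intro cond_map_pmf) (simp add: S_def)
  also have "\<dots> = map_pmf (proj V prj) (pmf_of_set (sat_fibre V Om Cs vbl viol prj v Z))"
    using \<open>finite S\<close> ne fibre by (simp add: cond_pmf_of_set)
  finally show "cond_marg (mu_pi V Om Cs vbl viol prj) V v Z =
      map_pmf (\<lambda>\<sigma>. prj v (\<sigma> v)) (pmf_of_set (sat_fibre V Om Cs vbl viol prj v Z))"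
    using \<open>v \<in> V\<close> by (simp add: cond_marg_def pmf.map_comp comp_def proj_def)
qed

lemma cond_marg_mu_pi_local:
  assumes csp: "atomic_csp V Om Cs vbl viol"
    and sat: "sat_assignments V Om Cs vbl viol \<noteq> {}"
    and pos: "measure_pmf.prob (mu_pi V Om Cs vbl viol prj) (agree_off V v Z) > 0"
    and "W \<subseteq> V" "v \<in> W" "R \<subseteq> Cs" "\<And>C. C \<in> R \<Longrightarrow> vbl C \<subseteq> W"
    and "\<And>C. C \<in> Cs \<Longrightarrow> C \<notin> R \<Longrightarrow> vbl C \<inter> W \<noteq> {} \<Longrightarrow> \<not> not_sat_off vbl viol prj v Z C"
  shows "cond_marg (mu_pi V Om Cs vbl viol prj) V v Z =
           map_pmf (\<lambda>\<tau>. prj v (\<tau> v)) (pmf_of_set (sat_fibre W Om R vbl viol prj v Z))"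
proof -
  have "v \<in> V" using assms(4,5) by auto
  have "finite (sat_fibre V Om Cs vbl viol prj v Z)"
    using finite_sat_assignments[OF csp] by (simp add: sat_fibre_def)
  with cond_marg_mu_pi[OF csp sat \<open>v \<in> V\<close> pos] show ?thesis
    using \<open>v \<in> W\<close>
    by (simp add: map_pmf_of_set_bij_betw_Times_fst[OF sat_fibre_split[OF csp assms(4,6-8)]])
qed

definition path_reachable :: "'c set \<Rightarrow> ('c \<Rightarrow> 'v set) \<Rightarrow> ('c \<Rightarrow> bool) \<Rightarrow> 'v \<Rightarrow> 'c set" where
  "path_reachable Cs vbl P v =
     {last cs | cs. is_path Cs vbl cs \<and> v \<in> vbl (hd cs) \<and> (\<forall>C\<in>set cs. P C)}"

lemma is_path_snoc:
  assumes path: "is_path Cs vbl cs" and "C \<in> Cs" "C \<noteq> last cs" "vbl (last cs) \<inter> vbl C \<noteq> {}"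
  shows "is_path Cs vbl (cs @ [C])"
proof -
  have "cs \<noteq> []" using path by (simp add: is_path_def)
  have "(cs @ [C]) ! i \<noteq> (cs @ [C]) ! Suc i \<and>
      vbl ((cs @ [C]) ! i) \<inter> vbl ((cs @ [C]) ! Suc i) \<noteq> {}"
    if i: "Suc i < length (cs @ [C])" for i
  proof (cases "Suc i < length cs")
    case True
    then show ?thesis using path by (simp add: is_path_def nth_append)
  next
    case False
    with i have "i = length cs - 1" by simp
    with \<open>cs \<noteq> []\<close> assms(3,4) show ?thesis by (simp add: nth_append last_conv_nth)
  qed
  with path \<open>C \<in> Cs\<close> show ?thesis by (simp add: is_path_def)
qed

lemma path_reachable_subset: "path_reachable Cs vbl P v \<subseteq> Cs"
  by (auto simp: path_reachable_def is_path_def)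

lemma path_reachable_closed:
  assumes "C \<in> Cs" "P C"
    and meets: "vbl C \<inter> insert v (\<Union>(vbl ` path_reachable Cs vbl P v)) \<noteq> {}"
  shows "C \<in> path_reachable Cs vbl P v"
proof (cases "v \<in> vbl C")
  case True
  then show ?thesis
    using assms(1,2) unfolding path_reachable_def
    by (intro CollectI exI[of _ "[C]"]) (simp add: is_path_def)
next
  case False
  with meets obtain C0 where "C0 \<in> path_reachable Cs vbl P v" "vbl C0 \<inter> vbl C \<noteq> {}" by blast
  then obtain cs where cs: "is_path Cs vbl cs" "v \<in> vbl (hd cs)" "\<forall>C\<in>set cs. P C" "last cs = C0"
    and C0: "vbl C0 \<inter> vbl C \<noteq> {}"
    by (auto simp: path_reachable_def)
  show ?thesis
  proof (cases "C = C0")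
    case False
    have "cs \<noteq> []" using cs(1) by (simp add: is_path_def)
    with cs assms(1,2) C0 False show ?thesis
      unfolding path_reachable_def
      by (intro CollectI exI[of _ "cs @ [C]"]) (auto intro: is_path_snoc)
  qed (use \<open>C0 \<in> path_reachable Cs vbl P v\<close> in simp)
qed

theorem lemma5p4:
  fixes V :: "'v set" and Om :: "'v \<Rightarrow> 'a set" and Cs :: "'c set"
    and vbl :: "'c \<Rightarrow> 'v set" and viol :: "'c \<Rightarrow> 'v \<Rightarrow> 'a"
    and prj :: "'v \<Rightarrow> 'a \<Rightarrow> 'q" and Q :: "'v \<Rightarrow> 'q set"
    and K eta :: real
    and X Y :: "'v \<Rightarrow> 'q" and v :: 'v and nu :: "('q \<times> 'q) pmf" and a b :: 'q
  assumes csp: "atomic_csp V Om Cs vbl viol"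
    and satisfiable: "sat_assignments V Om Cs vbl viol \<noteq> {}"
    and scheme: "proj_scheme V Om prj Q"
    and adm: "admissible K eta V Om Cs vbl viol prj Q"
    and X: "X \<in> PiE V Q" and Y: "Y \<in> PiE V Q"
    and v: "v \<in> V"
    and posX: "measure_pmf.prob (mu_pi V Om Cs vbl viol prj) (agree_off V v X) > 0"
    and posY: "measure_pmf.prob (mu_pi V Om Cs vbl viol prj) (agree_off V v Y) > 0"
    and coupling: "optimal_coupling nu
                     (cond_marg (mu_pi V Om Cs vbl viol prj) V v X)
                     (cond_marg (mu_pi V Om Cs vbl viol prj) V v Y)"
    and outcome: "(a, b) \<in> set_pmf nu"
    and disagree: "a \<noteq> b"
  shows "\<exists>cs. is_path Cs vbl cs \<and> v \<in> vbl (hd cs) \<and>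
           (\<forall>C\<in>set cs. not_sat_off vbl viol prj v X C \<or> not_sat_off vbl viol prj v Y C) \<and>
           (\<exists>u\<in>vbl (last cs). u \<noteq> v \<and> X u \<noteq> Y u)"
proof (rule ccontr)
  assume no_path: "\<not> ?thesis"
  define bad where "bad C \<longleftrightarrow> not_sat_off vbl viol prj v X C \<or> not_sat_off vbl viol prj v Y C" for C
  define R where "R = path_reachable Cs vbl bad v"
  define W where "W = insert v (\<Union>(vbl ` R))"
  have "R \<subseteq> Cs" by (simp add: R_def path_reachable_subset)
  then have "W \<subseteq> V" using csp v by (auto simp: W_def atomic_csp_def)
  have separated: "\<not> bad C" if "C \<in> Cs" "C \<notin> R" "vbl C \<inter> W \<noteq> {}" for C
    using that path_reachable_closed[of C Cs bad vbl v] by (auto simp: R_def W_def)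
  have "X w = Y w" if "w \<in> W - {v}" for w
    using that no_path by (auto simp: W_def R_def path_reachable_def bad_def)
  then have "sat_fibre W Om R vbl viol prj v X = sat_fibre W Om R vbl viol prj v Y"
    by (auto simp: sat_fibre_def)
  moreover have "cond_marg (mu_pi V Om Cs vbl viol prj) V v Z =
      map_pmf (\<lambda>\<tau>. prj v (\<tau> v)) (pmf_of_set (sat_fibre W Om R vbl viol prj v Z))"
    if "Z \<in> {X, Y}" for Z
    using that posX posY separated
    by (intro cond_marg_mu_pi_local[OF csp satisfiable _ \<open>W \<subseteq> V\<close> _ \<open>R \<subseteq> Cs\<close>])
       (auto simp: W_def bad_def)
  ultimately have "cond_marg (mu_pi V Om Cs vbl viol prj) V v X =
      cond_marg (mu_pi V Om Cs vbl viol prj) V v Y"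
    by simp
  with coupling outcome disagree show False by (metis optimal_coupling_same_diag)
qed

end
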